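(* There is a universal constant $C>0$ with the following property. Let $p\in(0,1)$, $\delta_0\in(0,1)$, let $f:\mathbb{Z}\to[0,\infty)$ with $\|f\|_1=1$, and let $\mathcal A$ be an $(N,n,K,\delta)$-admissible set for some parameters $N$, $\delta\in[\delta_0,1)$, $n\geq 1/\delta_0$ and $K$. Let $\ell$ be an integer with $\delta_0 n<\ell\leq n$. Then, deterministically (for every realization of $X_1,\dots,X_\ell$), $$\sum_{t\in I}f_{\mathcal A,p,\ell}(t)\leq \frac{C}{\sqrt{\delta_0 n\min(p,1-p)}}$$ for any integer interval $I\subset\mathbb{Z}$ with $|I|\leq N$, and $$\sum_{t\in J}f_{\mathcal A,p,\ell}(t)\leq \frac{2C|J|}{\sqrt{\delta_0 n\min(p,1-p)}\,N}$$ for any integer interval $J$ with $|J|\geq N$.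
   Context: For integers $N,n\geq1$ and reals $\delta\in(0,1]$, $K\geq1$, a set $\mathcal A\subset\mathbb{Z}^n$ is $(N,n,K,\delta)$-admissible if: $\mathcal A=A_1\times\dots\times A_n$ with each $A_i$ an origin-symmetric subset of $\mathbb{Z}$; $A_i$ is an integer interval of cardinality at least $2N+1$ for every $i>\delta n$; for every $i\leq\delta n$, $A_i$ is a union of two integer intervals of total cardinality at least $2N$ and $A_i\cap[-N,N]=\emptyset$; $|A_1|\cdots|A_n|\leq (KN)^n$; and $\max A_i<nN$ for all $i$. Given such $\mathcal A$, $p\in(0,1)$ and $f:\mathbb{Z}\to\mathbb{R}$, let $X_1,\dots,X_n$ be independent with $X_i$ uniform on $A_i$, and for $\ell\leq n$ define the random function $f_{\mathcal A,p,\ell}(t)=\sum_{(v_j)\in\{0,1\}^\ell}p^{\sum_j v_j}(1-p)^{\ell-\sum_j v_j} f(t+v_1X_1+\dots+v_\ell X_\ell)$, $t\in\mathbb{Z}$. $\|f\|_1=\sum_{t\in\mathbb{Z}}|f(t)|$. *)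

theory Defs
  imports "HOL-Analysis.Analysis"
begin

text \<open>An integer interval is a set of the form {a..b} (possibly empty).
  The admissible set \<A> = A_1 x ... x A_n is represented by its factors A i, i = 1..n.\<close>

definition int_interval :: "int set \<Rightarrow> bool" where
  "int_interval I \<longleftrightarrow> (\<exists>a b. I = {a..b})"

definition admissible :: "nat \<Rightarrow> nat \<Rightarrow> real \<Rightarrow> real \<Rightarrow> (nat \<Rightarrow> int set) \<Rightarrow> bool" where
  "admissible N n K \<delta> A \<longleftrightarrow>
     N \<ge> 1 \<and> n \<ge> 1 \<and> 0 < \<delta> \<and> \<delta> \<le> 1 \<and> K \<ge> 1 \<and>
     (\<forall>i\<in>{1..n}. \<forall>x. x \<in> A i \<longleftrightarrow> - x \<in> A i) \<and>
     (\<forall>i\<in>{1..n}. real i > \<delta> * real n \<longrightarrow>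
        int_interval (A i) \<and> card (A i) \<ge> 2 * N + 1) \<and>
     (\<forall>i\<in>{1..n}. real i \<le> \<delta> * real n \<longrightarrow>
        (\<exists>I1 I2. int_interval I1 \<and> int_interval I2 \<and> A i = I1 \<union> I2) \<and>
        card (A i) \<ge> 2 * N \<and> A i \<inter> {- int N..int N} = {}) \<and>
     (\<Prod>i=1..n. real (card (A i))) \<le> (K * real N) ^ n \<and>
     (\<forall>i\<in>{1..n}. Max (A i) < int n * int N)"

text \<open>The function f_{A,p,l} for a given realization x of X_1..X_l; the sum over
  v in {0,1}^l is written as a sum over subsets S = {j. v_j = 1} of {1..l}.\<close>

definition frand :: "real \<Rightarrow> nat \<Rightarrow> (int \<Rightarrow> real) \<Rightarrow> (nat \<Rightarrow> int) \<Rightarrow> int \<Rightarrow> real" where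
  "frand p l f x t =
     (\<Sum>S\<in>Pow {1..l}. p ^ card S * (1 - p) ^ (l - card S) * f (t + (\<Sum>j\<in>S. x j)))"

end

theory Submission
  imports Defs "HOL-Combinatorics.Multiset_Permutations"
begin

text \<open>The function f_{A,p,l} averages f over the shifts
  t + (\<Sum>j\<in>S. x j), with S a p-random subset of {1..l}, so the mass it puts on a finite set I
  is at most the largest probability that this random sum lies in a reflected translate of I.
  The coordinates j \<le> \<lfloor>\<delta>0 n\<rfloor> avoid [-N, N], and half of them, forming G, share a sign.
  Conditioned on S - G, the subsets of G whose sums hit an interval of length at most N
  form an antichain, so by the LYM inequality their p-weight is at most the largest point
  mass of Bin(|G|, p), which is at most 1 / sqrt (2 (|G| + 1) min p (1 - p)).
  Longer intervals are cut into pieces of length N.\<close>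

lemma card_permutations_of_set_with_prefix:
  assumes M: "finite M" and S: "S \<subseteq> M"
  shows "card {xs \<in> permutations_of_set M. set (take (card S) xs) = S}
         = fact (card S) * fact (card M - card S)"
proof -
  have fS: "finite S" using M S by (rule rev_finite_subset)
  let ?app = "\<lambda>(ys, zs). ys @ zs"
  let ?Ps = "permutations_of_set S \<times> permutations_of_set (M - S)"
  have "{xs \<in> permutations_of_set M. set (take (card S) xs) = S} = ?app ` ?Ps"
  proof (intro equalityI subsetI)
    fix xs assume "xs \<in> {xs \<in> permutations_of_set M. set (take (card S) xs) = S}"
    then have M_xs: "set xs = M" and dist: "distinct xs" and S_xs: "set (take (card S) xs) = S"
      by (auto dest: permutations_of_setD)
    have "set (take (card S) xs) \<inter> set (drop (card S) xs) = {}"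
      using dist by (metis append_take_drop_id distinct_append)
    moreover have "set (take (card S) xs) \<union> set (drop (card S) xs) = M"
      using M_xs by (metis append_take_drop_id set_append)
    ultimately have "set (drop (card S) xs) = M - S" using S_xs by blast
    then have "(take (card S) xs, drop (card S) xs) \<in> ?Ps"
      using dist S_xs by (simp add: permutations_of_setI)
    then show "xs \<in> ?app ` ?Ps" by (rule rev_image_eqI) simp
  next
    fix xs assume "xs \<in> ?app ` ?Ps"
    then obtain ys zs where xs: "xs = ys @ zs" and ys: "ys \<in> permutations_of_set S"
      and zs: "zs \<in> permutations_of_set (M - S)" by auto
    have "length ys = card S" using ys by (rule length_finite_permutations_of_set)
    then show "xs \<in> {xs \<in> permutations_of_set M. set (take (card S) xs) = S}"
      using xs ys zs S by (auto simp: permutations_of_set_def)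
  qed
  moreover have "inj_on ?app ?Ps"
    by (rule inj_onI) (auto simp: length_finite_permutations_of_set)
  ultimately show ?thesis
    using M fS S by (simp add: card_image card_cartesian_product card_Diff_subset)
qed

text \<open>Every permutation of M starts with at most one member of the antichain, and
  |S|! (|M| - |S|)! permutations start with S.\<close>

theorem LYM_inequality:
  assumes M: "finite M" and sub: "\<And>S. S \<in> \<A> \<Longrightarrow> S \<subseteq> M"
    and antichain: "\<And>S T. S \<in> \<A> \<Longrightarrow> T \<in> \<A> \<Longrightarrow> S \<subseteq> T \<Longrightarrow> S = T"
  shows "(\<Sum>S\<in>\<A>. 1 / real (card M choose card S)) \<le> 1"
proof -
  let ?P = "permutations_of_set M"
  let ?prefix = "\<lambda>S xs. set (take (card S) xs) = S"
  have fin: "finite \<A>" using M sub by (meson PowI finite_Pow_iff finite_subset subsetI)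
  have at_most_one: "card {S \<in> \<A>. ?prefix S xs} \<le> 1" for xs
  proof -
    have prefix_mono: "S \<subseteq> T" if "?prefix S xs" "?prefix T xs" "card S \<le> card T" for S T
      using set_take_subset_set_take[OF that(3), of xs] that(1,2) by simp
    have "S = T" if "S \<in> \<A>" "T \<in> \<A>" "?prefix S xs" "?prefix T xs" for S T
    proof (cases "card S \<le> card T")
      case True
      then show ?thesis using antichain prefix_mono that by blast
    next
      case False
      then show ?thesis using antichain[symmetric] prefix_mono that by (meson nat_le_linear)
    qed
    then show ?thesis using fin by (auto simp: card_le_Suc0_iff_eq)
  qed
  have "(\<Sum>S\<in>\<A>. fact (card S) * fact (card M - card S)) = (\<Sum>S\<in>\<A>. card {xs \<in> ?P. ?prefix S xs})"
    using M sub by (simp add: card_permutations_of_set_with_prefix)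
  also have "\<dots> = (\<Sum>xs\<in>?P. card {S \<in> \<A>. ?prefix S xs})"
    using sum.swap_restrict[OF fin finite_permutations_of_set, where g="\<lambda>_ _. 1::nat" and R="?prefix"] by simp
  also have "\<dots> \<le> (\<Sum>xs\<in>?P. 1)" by (intro sum_mono at_most_one)
  finally have count: "(\<Sum>S\<in>\<A>. fact (card S) * fact (card M - card S)) \<le> (fact (card M) :: nat)"
    using M by simp
  have "(\<Sum>S\<in>\<A>. 1 / real (card M choose card S))
      = (\<Sum>S\<in>\<A>. real (fact (card S) * fact (card M - card S))) / fact (card M)"
    unfolding sum_divide_distrib
  proof (intro sum.cong refl)
    fix S assume "S \<in> \<A>"
    then have "card S \<le> card M" using M sub by (simp add: card_mono)
    then show "1 / real (card M choose card S) = real (fact (card S) * fact (card M - card S)) / fact (card M)"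
      by (simp add: binomial_fact)
  qed
  also have "\<dots> \<le> 1"
  proof -
    have "(\<Sum>S\<in>\<A>. real (fact (card S) * fact (card M - card S))) \<le> fact (card M)"
      using of_nat_mono[OF count] unfolding of_nat_sum of_nat_fact .
    then show ?thesis by simp
  qed
  finally show ?thesis .
qed

lemma central_binomial_sq_le: "real ((2*m) choose m)^2 * (2*m+1) \<le> 4^(2*m)"
proof (induction m)
  case 0
  then show ?case by simp
next
  case (Suc m)
  let ?c = "real ((2*m) choose m)"
  have step: "real ((2*Suc m) choose Suc m) = ?c * (2*(2*m+1)) / (m+1)"
  proof -
    have odd_sym: "Suc (2*m) choose Suc m = Suc (2*m) choose m"
      using central_binomial_odd[of "Suc (2*m)"] by simp
    have "(2*Suc m) choose Suc m = 2 * (Suc (2*m) choose m)"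
      using odd_sym by simp
    moreover have "Suc m * (Suc (2*m) choose m) = Suc (2*m) * ((2*m) choose m)"
      using Suc_times_binomial[of m "2*m"] odd_sym by simp
    ultimately have "real ((2*Suc m) choose Suc m) * (m+1) = ?c * (2*(2*m+1))"
      by (metis (no_types, lifting) mult.left_commute mult.commute of_nat_mult Suc_eq_plus1)
    then show ?thesis by (simp add: field_simps)
  qed
  have "real ((2*Suc m) choose Suc m)^2 * (2*Suc m+1)
      = ?c^2 * (2*real m+1) * (4*(2*real m+1)*(2*real m+3)/(real m+1)^2)"
    unfolding step by (simp add: field_simps power2_eq_square)
  also have "\<dots> \<le> 4^(2*m) * 16"
  proof (rule mult_mono)
    have "4*(2*real m+1)*(2*real m+3) \<le> 16 * (real m+1)^2"
      by (simp add: algebra_simps power2_eq_square)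
    then show "4*(2*real m+1)*(2*real m+3)/(real m+1)^2 \<le> 16"
      by (simp add: divide_le_eq algebra_simps)
  qed (use Suc.IH in \<open>simp_all add: algebra_simps\<close>)
  also have "\<dots> = 4^(2*Suc m)" by (simp add: power_add)
  finally show ?case by simp
qed

lemma binomial_div_pow2_le: "real (r choose k) / 2^r \<le> 1 / sqrt (real r + 1)"
proof -
  have central_sq: "real (r choose (r div 2))^2 * (real r + 1) \<le> 4^r"
  proof (cases "even r")
    case True
    then obtain m where "r = 2*m" by blast
    then show ?thesis using central_binomial_sq_le[of m] by (simp add: add.commute)
  next
    case False
    then obtain m where r: "r = 2*m+1" using oddE by blast
    have "(2*Suc m) choose Suc m = 2 * (r choose (r div 2))"
      using central_binomial_odd[of r] False r by simp
    then have "real (r choose (r div 2))^2 * (real r + 1) = real ((2*Suc m) choose Suc m)^2 * (2*m+2) / 4"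
      using r by (simp add: power2_eq_square field_simps)
    also have "\<dots> \<le> real ((2*Suc m) choose Suc m)^2 * (2*Suc m+1) / 4"
      by (intro divide_right_mono mult_left_mono) auto
    also have "\<dots> \<le> 4^r"
      using central_binomial_sq_le[of "Suc m"] r by (simp add: power_add)
    finally show ?thesis .
  qed
  have "real (r choose k)^2 * (real r + 1) \<le> real (r choose (r div 2))^2 * (real r + 1)"
    using binomial_maximum[of r k] by (intro mult_right_mono power_mono) auto
  with central_sq have "real (r choose k)^2 / 4^r \<le> 1 / (real r + 1)"
    by (simp add: field_simps)
  moreover have "(2::real)^r * 2^r = 4^r"
    unfolding power_mult_distrib[symmetric] by simp
  ultimately have "(real (r choose k) / 2^r)^2 \<le> (1 / sqrt (real r + 1))^2"
    by (simp add: power_divide power2_eq_square)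
  then show ?thesis
    by (rule power2_le_imp_le) simp
qed

lemma binomial_pmf_thinning:
  fixes a b :: real
  assumes "k \<le> n"
  shows "real (n choose k) * (a*b)^k * (1 - a*b)^(n-k)
    = (\<Sum>r\<le>n. real (n choose r) * a^r * (1-a)^(n-r) * (real (r choose k) * b^k * (1-b)^(r-k)))"
proof -
  have "(\<Sum>r\<le>n. real (n choose r) * a^r * (1-a)^(n-r) * (real (r choose k) * b^k * (1-b)^(r-k)))
      = (\<Sum>r\<in>{k..n}. real (n choose r) * real (r choose k) * a^r * (1-a)^(n-r) * b^k * (1-b)^(r-k))"
    by (rule sum.mono_neutral_cong_right) auto
  also have "\<dots> = (\<Sum>r\<in>{k..n}. real (n choose k) * real ((n-k) choose (r-k)) * a^r * (1-a)^(n-r) * b^k * (1-b)^(r-k))"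
  proof (intro sum.cong refl)
    fix r assume "r \<in> {k..n}"
    then have "(n choose r) * (r choose k) = (n choose k) * ((n - k) choose (r - k))"
      by (intro choose_mult) auto
    then show "real (n choose r) * real (r choose k) * a^r * (1-a)^(n-r) * b^k * (1-b)^(r-k)
        = real (n choose k) * real ((n-k) choose (r-k)) * a^r * (1-a)^(n-r) * b^k * (1-b)^(r-k)"
      by (metis of_nat_mult)
  qed
  also have "\<dots> = (\<Sum>s\<le>n-k. real (n choose k) * real ((n-k) choose s) * a^(k+s) * (1-a)^((n-k)-s) * b^k * (1-b)^s)"
    by (simp add: sum.atLeastAtMost_shift_0[OF assms] atLeast0AtMost)
  also have "\<dots> = real (n choose k) * (a*b)^k * (\<Sum>s\<le>n-k. real ((n-k) choose s) * (a*(1-b))^s * (1-a)^((n-k)-s))"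
    by (simp add: sum_distrib_left power_add power_mult_distrib mult_ac)
  also have "\<dots> = real (n choose k) * (a*b)^k * (a*(1-b) + (1-a))^(n-k)"
    by (simp only: binomial_ring)
  also have "a*(1-b) + (1-a) = 1 - a*b"
    by (simp add: algebra_simps)
  finally show ?thesis by simp
qed

lemma binomial_mean_inverse_succ_le:
  fixes a :: real
  assumes "0 < a" "a \<le> 1"
  shows "(\<Sum>r\<le>n. real (n choose r) * a^r * (1-a)^(n-r) / (real r + 1)) \<le> 1 / ((real n + 1)*a)"
proof -
  let ?g = "\<lambda>s. real (Suc n choose s) * a^s * (1-a)^(Suc n - s)"
  have "(\<Sum>r\<le>n. real (n choose r) * a^r * (1-a)^(n-r) / (real r + 1)) * ((real n + 1)*a) = (\<Sum>r\<le>n. ?g (Suc r))"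
    unfolding sum_distrib_right
  proof (intro sum.cong refl)
    fix r
    have coef: "real (Suc n choose Suc r) = real (Suc n) * real (n choose r) / real (Suc r)"
      using Suc_times_binomial_eq[of n r] by (simp add: field_simps del: binomial_Suc_Suc flip: of_nat_mult)
    show "real (n choose r) * a^r * (1-a)^(n-r) / (real r + 1) * ((real n + 1)*a) = ?g (Suc r)"
      by (subst coef) (simp add: field_simps)
  qed
  also have "\<dots> = (a + (1-a))^(Suc n) - ?g 0"
    by (simp only: sum.atMost_Suc_shift binomial_ring)
  also have "\<dots> \<le> 1" using assms by simp
  finally show ?thesis
    using assms by (simp add: pos_le_divide_eq)
qed

lemma inverse_sqrt_le_arith_mean:
  fixes x t :: real
  assumes "x > 0" "t > 0"
  shows "1 / sqrt x \<le> (t / x + 1 / t) / 2"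
proof -
  define u where "u = sqrt x"
  have u: "u > 0" "x = u^2" using assms by (auto simp: u_def)
  have "2 * t * u \<le> t^2 + u^2"
    by (rule sum_squares_bound)
  then have "2 / u \<le> t / u^2 + 1 / t"
    using u assms by (simp add: field_simps power2_eq_square)
  then show ?thesis using u unfolding u_def[symmetric] by simp
qed

text \<open>Bin(n, p) is Bin(n, 2p) thinned by fair coins. Averaging the central bound
  1 / sqrt (r + 1) for Bin(r, 1/2) over Bin(n, 2p) with AM-GM at t = sqrt ((n + 1) 2p),
  together with E[1 / (R + 1)] \<le> 1 / ((n + 1) 2p), gives the claim.\<close>

lemma binomial_pmf_le_small_p:
  fixes p :: real
  assumes "0 < p" "2*p \<le> 1"
  shows "real (n choose k) * p^k * (1-p)^(n-k) \<le> 1 / sqrt (2*(real n+1)*p)"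
proof (cases "k \<le> n")
  case False
  then show ?thesis using assms by (simp add: binomial_eq_0)
next
  case True
  define a where "a = 2*p"
  have a: "0 < a" "a \<le> 1" using assms by (auto simp: a_def)
  define t where "t = sqrt ((real n + 1)*a)"
  have t: "t > 0" "t^2 = (real n + 1)*a" using a by (auto simp: t_def)
  let ?w = "\<lambda>r. real (n choose r) * a^r * (1-a)^(n-r)"
  have w_nonneg: "?w r \<ge> 0" for r using a by simp
  have halves: "real (r choose k) * (1/2)^k * (1 - 1/2)^(r-k) = real (r choose k) / 2^r" for r
    by (cases "k \<le> r") (simp_all add: binomial_eq_0 power_one_over flip: power_add)
  have "real (n choose k) * p^k * (1-p)^(n-k) = real (n choose k) * (a*(1/2))^k * (1 - a*(1/2))^(n-k)"
    by (simp add: a_def)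
  also have "\<dots> = (\<Sum>r\<le>n. ?w r * (real (r choose k) * (1/2)^k * (1 - 1/2)^(r-k)))"
    by (rule binomial_pmf_thinning[OF True])
  also have "\<dots> = (\<Sum>r\<le>n. ?w r * (real (r choose k) / 2^r))"
    by (simp only: halves)
  also have "\<dots> \<le> (\<Sum>r\<le>n. ?w r * ((t / (real r + 1) + 1/t) / 2))"
    by (intro sum_mono mult_left_mono w_nonneg order_trans[OF binomial_div_pow2_le]
        inverse_sqrt_le_arith_mean t(1)) simp
  also have "\<dots> = (\<Sum>r\<le>n. (t * (?w r / (real r + 1)) + ?w r / t) / 2)"
    by (simp add: ring_distribs mult_ac)
  also have "\<dots> = (t * (\<Sum>r\<le>n. ?w r / (real r + 1)) + (\<Sum>r\<le>n. ?w r) / t) / 2"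
    by (simp only: sum_divide_distrib[symmetric] sum.distrib sum_distrib_left[symmetric])
  also have "(\<Sum>r\<le>n. ?w r) = 1"
    using binomial_ring[of a "1-a" n] by simp
  also have "t * (\<Sum>r\<le>n. ?w r / (real r + 1)) \<le> t * (1 / ((real n + 1)*a))"
    using binomial_mean_inverse_succ_le[OF a, of n] t by (intro mult_left_mono) simp_all
  also have "t * (1 / ((real n + 1)*a)) = 1/t"
    unfolding t(2)[symmetric] using t(1) by (simp add: power2_eq_square)
  finally show ?thesis
    by (simp add: t_def a_def algebra_simps)
qed

lemma binomial_pmf_le:
  fixes p :: real
  assumes "0 < p" "p < 1"
  shows "real (n choose k) * p^k * (1-p)^(n-k) \<le> 1 / sqrt (2*(real n+1)*min p (1-p))"
proof (cases "2*p \<le> 1")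
  case True
  then show ?thesis using binomial_pmf_le_small_p[OF assms(1) True] by (simp add: min_def)
next
  case False
  show ?thesis
  proof (cases "k \<le> n")
    case False
    then show ?thesis using assms by (simp add: binomial_eq_0)
  next
    case True
    have "real (n choose k) * p^k * (1-p)^(n-k) = real (n choose (n-k)) * (1-p)^(n-k) * (1-(1-p))^(n-(n-k))"
      using True binomial_symmetric[OF True] by simp
    also have "\<dots> \<le> 1 / sqrt (2*(real n+1)*(1-p))"
      by (rule binomial_pmf_le_small_p) (use assms False in auto)
    finally show ?thesis
      using False by (simp add: min_def)
  qed
qed

definition subset_weight :: "real \<Rightarrow> nat \<Rightarrow> 'a set \<Rightarrow> real" where
  "subset_weight p n S = p ^ card S * (1 - p) ^ (n - card S)"

lemma subset_weight_nonneg: "0 \<le> p \<Longrightarrow> p \<le> 1 \<Longrightarrow> 0 \<le> subset_weight p n S"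
  by (simp add: subset_weight_def)

lemma sum_subset_weight_Pow:
  assumes "finite A"
  shows "(\<Sum>S\<in>Pow A. subset_weight p (card A) S) = 1"
proof -
  have "(\<Sum>S\<in>Pow A. subset_weight p (card A) S) = (\<Sum>S\<in>Pow A. (\<Prod>_\<in>S. p) * (\<Prod>_\<in>A - S. 1 - p))"
  proof (intro sum.cong refl)
    fix S assume "S \<in> Pow A"
    with assms have "finite S" "S \<subseteq> A" by (auto dest: finite_subset)
    then show "subset_weight p (card A) S = (\<Prod>_\<in>S. p) * (\<Prod>_\<in>A - S. 1 - p)"
      by (simp add: subset_weight_def card_Diff_subset)
  qed
  also have "\<dots> = (\<Prod>_\<in>A. p + (1 - p))"
    using assms by (rule prod_add[symmetric])
  finally show ?thesis by simp
qed

lemma sum_Pow_subset_weight_split: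
  assumes L: "finite L" and GL: "G \<subseteq> L"
  shows "(\<Sum>S\<in>Pow L. subset_weight p (card L) S * g S)
       = (\<Sum>T\<in>Pow (L - G). subset_weight p (card (L - G)) T *
            (\<Sum>U\<in>Pow G. subset_weight p (card G) U * g (T \<union> U)))"
proof -
  have fG: "finite G" using L GL by (rule finite_subset[rotated])
  let ?un = "\<lambda>(T, U). T \<union> U"
  have inj: "inj_on ?un (Pow (L - G) \<times> Pow G)"
    by (rule inj_onI) auto
  have img: "?un ` (Pow (L - G) \<times> Pow G) = Pow L"
  proof (intro equalityI subsetI)
    fix S assume "S \<in> Pow L"
    then have "(S - G, S \<inter> G) \<in> Pow (L - G) \<times> Pow G" by auto
    then show "S \<in> ?un ` (Pow (L - G) \<times> Pow G)" by (rule rev_image_eqI) auto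
  qed (use GL in auto)
  have weight_mult: "subset_weight p (card L) (T \<union> U) = subset_weight p (card (L - G)) T * subset_weight p (card G) U"
    if "T \<subseteq> L - G" "U \<subseteq> G" for T U
  proof -
    have fin: "finite T" "finite U" using that L fG by (auto dest: finite_subset)
    have "card (T \<union> U) = card T + card U"
      using that fin by (intro card_Un_disjoint) auto
    moreover have "card L = card (L - G) + card G"
      using card_Diff_subset[OF fG GL] card_mono[OF L GL] by simp
    moreover have "card T \<le> card (L - G)" "card U \<le> card G"
      using that L fG by (auto intro: card_mono)
    ultimately have "card L - card (T \<union> U) = (card (L - G) - card T) + (card G - card U)"
      by simp
    then show ?thesis
      unfolding subset_weight_def \<open>card (T \<union> U) = card T + card U\<close> by (simp add: power_add)
  qed
  have "(\<Sum>S\<in>Pow L. subset_weight p (card L) S * g S)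
      = (\<Sum>(T, U)\<in>Pow (L - G) \<times> Pow G. subset_weight p (card L) (T \<union> U) * g (T \<union> U))"
    unfolding img[symmetric] by (subst sum.reindex[OF inj]) (simp add: case_prod_unfold)
  also have "\<dots> = (\<Sum>T\<in>Pow (L - G). \<Sum>U\<in>Pow G. subset_weight p (card L) (T \<union> U) * g (T \<union> U))"
    by (rule sum.cartesian_product[symmetric])
  also have "\<dots> = (\<Sum>T\<in>Pow (L - G). subset_weight p (card (L - G)) T *
                      (\<Sum>U\<in>Pow G. subset_weight p (card G) U * g (T \<union> U)))"
    by (auto simp: sum_distrib_left weight_mult mult.assoc intro!: sum.cong)
  finally show ?thesis .
qed

lemma antichain_subset_weight_le:
  assumes M: "finite M" and sub: "\<And>S. S \<in> \<A> \<Longrightarrow> S \<subseteq> M"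
    and antichain: "\<And>S T. S \<in> \<A> \<Longrightarrow> T \<in> \<A> \<Longrightarrow> S \<subseteq> T \<Longrightarrow> S = T"
    and p: "0 < p" "p < 1"
  shows "(\<Sum>S\<in>\<A>. subset_weight p (card M) S) \<le> 1 / sqrt (2 * (real (card M) + 1) * min p (1 - p))"
    (is "_ \<le> ?\<beta>")
proof -
  have "(\<Sum>S\<in>\<A>. subset_weight p (card M) S) \<le> (\<Sum>S\<in>\<A>. ?\<beta> * (1 / real (card M choose card S)))"
  proof (rule sum_mono)
    fix S assume "S \<in> \<A>"
    then have "0 < card M choose card S"
      using M sub by (simp add: card_mono)
    then have "subset_weight p (card M) S
        = real (card M choose card S) * p ^ card S * (1 - p) ^ (card M - card S) / real (card M choose card S)"
      by (simp add: subset_weight_def)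
    also have "\<dots> \<le> ?\<beta> / real (card M choose card S)"
      by (intro divide_right_mono binomial_pmf_le p) simp
    finally show "subset_weight p (card M) S \<le> ?\<beta> * (1 / real (card M choose card S))" by simp
  qed
  also have "\<dots> = ?\<beta> * (\<Sum>S\<in>\<A>. 1 / real (card M choose card S))"
    by (simp add: sum_distrib_left)
  also have "\<dots> \<le> ?\<beta>"
    using LYM_inequality[OF M sub antichain] by (intro mult_left_le) (use p in simp_all)
  finally show ?thesis .
qed

lemma subset_sums_in_short_interval_antichain:
  fixes x :: "nat \<Rightarrow> int"
  assumes I: "card {a..b} \<le> N"
    and large: "(\<forall>j\<in>G. int N \<le> x j) \<or> (\<forall>j\<in>G. x j \<le> - int N)"
    and "finite G" "T \<subseteq> G" "S \<subseteq> T"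
    and S_in: "(\<Sum>j\<in>S. x j) \<in> {a..b}" and T_in: "(\<Sum>j\<in>T. x j) \<in> {a..b}"
  shows "S = T"
proof (rule ccontr)
  assume "S \<noteq> T"
  let ?D = "T - S"
  have fin: "finite T" using assms by (auto dest: finite_subset)
  have D: "?D \<noteq> {}" "?D \<subseteq> G" using \<open>S \<noteq> T\<close> assms by auto
  then have "1 \<le> card ?D" using fin by (simp add: Suc_le_eq card_gt_0_iff)
  then have N_le: "int N \<le> int (card ?D) * int N" by (simp add: mult_le_cancel_right1)
  have "(\<Sum>j\<in>T. x j) = (\<Sum>j\<in>S. x j) + (\<Sum>j\<in>?D. x j)"
    using sum.subset_diff[OF \<open>S \<subseteq> T\<close> fin] by (simp add: add.commute)
  then have "\<bar>\<Sum>j\<in>?D. x j\<bar> < int N"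
    using S_in T_in I by auto
  moreover have "int N \<le> \<bar>\<Sum>j\<in>?D. x j\<bar>"
    using large
  proof
    assume "\<forall>j\<in>G. int N \<le> x j"
    then have "int (card ?D) * int N \<le> (\<Sum>j\<in>?D. x j)"
      using D by (intro sum_bounded_below) auto
    then show ?thesis using N_le by linarith
  next
    assume "\<forall>j\<in>G. x j \<le> - int N"
    then have "(\<Sum>j\<in>?D. x j) \<le> int (card ?D) * - int N"
      using D by (intro sum_bounded_above) auto
    then show ?thesis using N_le by linarith
  qed
  ultimately show False by simp
qed

theorem littlewood_offord_interval:
  fixes x :: "nat \<Rightarrow> int"
  assumes "finite G" and "card {a..b} \<le> N"
    and "(\<forall>j\<in>G. int N \<le> x j) \<or> (\<forall>j\<in>G. x j \<le> - int N)"
    and "0 < p" "p < 1"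
  shows "(\<Sum>U\<in>Pow G. subset_weight p (card G) U * of_bool ((\<Sum>j\<in>U. x j) \<in> {a..b}))
         \<le> 1 / sqrt (2 * (real (card G) + 1) * min p (1 - p))"
proof -
  let ?\<A> = "{U \<in> Pow G. (\<Sum>j\<in>U. x j) \<in> {a..b}}"
  have "(\<Sum>U\<in>Pow G. subset_weight p (card G) U * of_bool ((\<Sum>j\<in>U. x j) \<in> {a..b}))
      = (\<Sum>U\<in>?\<A>. subset_weight p (card G) U)"
    using assms(1) by (simp add: sum.inter_filter[symmetric] of_bool_def if_distrib cong: if_cong)
  also have "\<dots> \<le> 1 / sqrt (2 * (real (card G) + 1) * min p (1 - p))"
    using subset_sums_in_short_interval_antichain[OF assms(2,3,1)]
    by (intro antichain_subset_weight_le assms(1,4,5)) auto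
  finally show ?thesis .
qed

lemma subset_sum_interval_probability_le:
  fixes x :: "nat \<Rightarrow> int"
  assumes L: "finite L" and GL: "G \<subseteq> L" and I: "card {a..b} \<le> N"
    and large: "(\<forall>j\<in>G. int N \<le> x j) \<or> (\<forall>j\<in>G. x j \<le> - int N)"
    and p: "0 < p" "p < 1"
  shows "(\<Sum>S\<in>Pow L. subset_weight p (card L) S * of_bool ((\<Sum>j\<in>S. x j) \<in> {a..b}))
         \<le> 1 / sqrt (2 * (real (card G) + 1) * min p (1 - p))"
    (is "_ \<le> ?\<beta>")
proof -
  have fG: "finite G" using L GL by (rule finite_subset[rotated])
  have shifted: "(\<Sum>U\<in>Pow G. subset_weight p (card G) U * of_bool ((\<Sum>j\<in>T \<union> U. x j) \<in> {a..b})) \<le> ?\<beta>"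
    if T: "T \<subseteq> L - G" for T
  proof -
    have "(\<Sum>j\<in>T \<union> U. x j) = (\<Sum>j\<in>T. x j) + (\<Sum>j\<in>U. x j)" if "U \<subseteq> G" for U
      using T that L fG by (intro sum.union_disjoint) (auto dest: finite_subset)
    then have "(\<Sum>U\<in>Pow G. subset_weight p (card G) U * of_bool ((\<Sum>j\<in>T \<union> U. x j) \<in> {a..b}))
        = (\<Sum>U\<in>Pow G. subset_weight p (card G) U *
             of_bool ((\<Sum>j\<in>U. x j) \<in> {a - (\<Sum>j\<in>T. x j)..b - (\<Sum>j\<in>T. x j)}))"
      by (intro sum.cong refl) auto
    also have "\<dots> \<le> ?\<beta>"
      by (rule littlewood_offord_interval[OF fG _ large p]) (use I in simp)
    finally show ?thesis .
  qed
  have "(\<Sum>S\<in>Pow L. subset_weight p (card L) S * of_bool ((\<Sum>j\<in>S. x j) \<in> {a..b}))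
      = (\<Sum>T\<in>Pow (L - G). subset_weight p (card (L - G)) T *
           (\<Sum>U\<in>Pow G. subset_weight p (card G) U * of_bool ((\<Sum>j\<in>T \<union> U. x j) \<in> {a..b})))"
    by (rule sum_Pow_subset_weight_split[OF L GL])
  also have "\<dots> \<le> (\<Sum>T\<in>Pow (L - G). subset_weight p (card (L - G)) T * ?\<beta>)"
    using p by (intro sum_mono mult_left_mono shifted subset_weight_nonneg) auto
  also have "\<dots> = ?\<beta>"
    by (simp only: sum_distrib_right[symmetric] sum_subset_weight_Pow[OF finite_Diff[OF L]] mult_1)
  finally show ?thesis .
qed

lemma frand_eq_sum_subset_weight:
  "frand p l f x t = (\<Sum>S\<in>Pow {1..l}. subset_weight p l S * f (t + (\<Sum>j\<in>S. x j)))"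
  by (simp add: frand_def subset_weight_def)

lemma sum_frand_le_window_bound:
  fixes f :: "int \<Rightarrow> real" and x :: "nat \<Rightarrow> int" and I :: "int set"
  assumes f_nonneg: "\<And>t. 0 \<le> f t" and f_sum: "(f has_sum 1) UNIV" and I: "finite I"
    and window: "\<And>u. (\<Sum>S\<in>Pow {1..l}. subset_weight p l S * of_bool (u - (\<Sum>j\<in>S. x j) \<in> I)) \<le> \<beta>"
    and \<beta>: "0 \<le> \<beta>"
  shows "(\<Sum>t\<in>I. frand p l f x t) \<le> \<beta>"
proof -
  let ?P = "Pow {1..l}"
  let ?\<sigma> = "\<lambda>S. \<Sum>j\<in>S. x j"
  let ?w = "subset_weight p l"
  define F where "F = (\<Union>S\<in>?P. (\<lambda>t. t + ?\<sigma> S) ` I)"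
  have F: "finite F" using I by (simp add: F_def)
  have shift: "(\<Sum>t\<in>I. f (t + ?\<sigma> S)) = (\<Sum>u\<in>F. f u * of_bool (u - ?\<sigma> S \<in> I))" if "S \<in> ?P" for S
  proof -
    have image: "(\<lambda>t. t + ?\<sigma> S) ` I = {u. u - ?\<sigma> S \<in> I}"
      by (auto simp: image_iff) (metis diff_add_cancel)
    have "(\<Sum>t\<in>I. f (t + ?\<sigma> S)) = (\<Sum>u\<in>(\<lambda>t. t + ?\<sigma> S) ` I. f u * of_bool (u - ?\<sigma> S \<in> I))"
      by (simp add: sum.reindex inj_on_def)
    also have "\<dots> = (\<Sum>u\<in>F. f u * of_bool (u - ?\<sigma> S \<in> I))"
      using F that by (intro sum.mono_neutral_left) (auto simp: F_def image)
    finally show ?thesis .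
  qed
  have "(\<Sum>t\<in>I. frand p l f x t) = (\<Sum>S\<in>?P. ?w S * (\<Sum>t\<in>I. f (t + ?\<sigma> S)))"
    unfolding frand_eq_sum_subset_weight by (subst sum.swap) (simp add: sum_distrib_left)
  also have "\<dots> = (\<Sum>S\<in>?P. \<Sum>u\<in>F. f u * (?w S * of_bool (u - ?\<sigma> S \<in> I)))"
    by (intro sum.cong refl) (simp only: shift sum_distrib_left mult.left_commute)
  also have "\<dots> = (\<Sum>u\<in>F. f u * (\<Sum>S\<in>?P. ?w S * of_bool (u - ?\<sigma> S \<in> I)))"
    by (subst sum.swap) (simp only: sum_distrib_left)
  also have "\<dots> \<le> (\<Sum>u\<in>F. f u * \<beta>)"
    by (intro sum_mono mult_left_mono window f_nonneg)
  also have "\<dots> = (\<Sum>u\<in>F. f u) * \<beta>"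
    by (simp add: sum_distrib_right)
  also have "\<dots> \<le> \<beta>"
    using finite_sum_le_has_sum[OF f_sum F] f_nonneg
    by (intro mult_left_le_one_le \<beta> sum_nonneg) auto
  finally show ?thesis .
qed

lemma sum_interval_le_by_blocks:
  fixes g :: "int \<Rightarrow> real"
  assumes N: "1 \<le> N" and \<beta>: "0 \<le> \<beta>"
    and short: "\<And>a b. card {a..b} \<le> N \<Longrightarrow> (\<Sum>t\<in>{a..b}. g t) \<le> \<beta>"
  shows "(\<Sum>t\<in>{a..b}. g t) \<le> (real (card {a..b}) / N + 1) * \<beta>"
proof (induction "card {a..b}" arbitrary: a rule: less_induct)
  case less
  show ?case
  proof (cases "card {a..b} \<le> N")
    case True
    have "\<beta> \<le> (real (card {a..b}) / N + 1) * \<beta>"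
      using \<beta> by (simp add: distrib_right)
    then show ?thesis
      using short[OF True] by linarith
  next
    case False
    then have split: "{a..b} = {a..a + int N - 1} \<union> {a + int N..b}" by auto
    have card_tail: "card {a + int N..b} = card {a..b} - N" using False by simp
    then have "card {a + int N..b} < card {a..b}" using N False by simp
    then have tail: "(\<Sum>t\<in>{a + int N..b}. g t) \<le> (real (card {a + int N..b}) / N + 1) * \<beta>"
      by (rule less)
    have "(\<Sum>t\<in>{a..b}. g t) = (\<Sum>t\<in>{a..a + int N - 1}. g t) + (\<Sum>t\<in>{a + int N..b}. g t)"
      unfolding split by (rule sum.union_disjoint) auto
    also have "\<dots> \<le> \<beta> + (real (card {a + int N..b}) / N + 1) * \<beta>"
      using short[of a "a + int N - 1"] tail by simp
    also have "\<dots> = (real (card {a..b}) / N + 1) * \<beta>"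
      using card_tail False N by (simp add: field_simps)
    finally show ?thesis .
  qed
qed

lemma sum_long_interval_le:
  fixes g :: "int \<Rightarrow> real"
  assumes N: "1 \<le> N" and \<beta>: "0 \<le> \<beta>"
    and short: "\<And>a b. card {a..b} \<le> N \<Longrightarrow> (\<Sum>t\<in>{a..b}. g t) \<le> \<beta>"
    and long: "N \<le> card {a..b}"
  shows "(\<Sum>t\<in>{a..b}. g t) \<le> 2 * real (card {a..b}) * \<beta> / N"
proof -
  have "1 \<le> real (card {a..b}) / N"
    using N long by (simp add: le_divide_eq)
  then have "(real (card {a..b}) / N + 1) * \<beta> \<le> 2 * (real (card {a..b}) / N) * \<beta>"
    by (intro mult_right_mono[OF _ \<beta>]) linarith
  also have "\<dots> = 2 * real (card {a..b}) * \<beta> / N"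
    by simp
  finally show ?thesis
    using sum_interval_le_by_blocks[OF N \<beta> short, of a b] by linarith
qed

lemma admissible_outside_centre:
  assumes adm: "admissible N n K \<delta> A" and j: "1 \<le> j" "real j \<le> \<delta> * real n" and y: "y \<in> A j"
  shows "int N < \<bar>y\<bar>"
proof -
  have "0 \<le> \<delta>" "\<delta> \<le> 1" using adm by (auto simp: admissible_def)
  then have "\<delta> * real n \<le> real n" by (simp add: mult_left_le_one_le)
  then have "j \<in> {1..n}" using j by simp
  then have "A j \<inter> {- int N..int N} = {}"
    using adm j by (auto simp: admissible_def)
  then have "y \<notin> {- int N..int N}" using y by blast
  then show ?thesis by (cases "0 \<le> y") auto
qed

lemma exists_monochromatic_half:
  assumes "finite B"
  obtains G where "G \<subseteq> B" "card B \<le> 2 * card G" "(\<forall>j\<in>G. P j) \<or> (\<forall>j\<in>G. \<not> P j)"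
proof -
  let ?Y = "{j \<in> B. P j}" and ?N = "{j \<in> B. \<not> P j}"
  have "card B = card ?Y + card ?N"
    using assms by (subst card_Un_disjoint[symmetric]) (auto intro: arg_cong[where f=card])
  then show ?thesis
    using that[of ?Y] that[of ?N] by (cases "card ?N \<le> card ?Y") auto
qed

lemma sum_frand_short_interval_le:
  fixes f :: "int \<Rightarrow> real" and x :: "nat \<Rightarrow> int"
  assumes p: "0 < p" "p < 1" and \<delta>0: "0 < \<delta>0" "\<delta>0 \<le> \<delta>"
    and f_nonneg: "\<And>t. 0 \<le> f t" and f_sum: "(f has_sum 1) UNIV"
    and adm: "admissible N n K \<delta> A" and l: "\<delta>0 * real n < real l"
    and x: "\<forall>j\<in>{1..l}. x j \<in> A j" and I: "card {a..b} \<le> N"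
  shows "(\<Sum>t\<in>{a..b}. frand p l f x t) \<le> 1 / sqrt (\<delta>0 * real n * min p (1 - p))"
proof -
  define m where "m = nat \<lfloor>\<delta>0 * real n\<rfloor>"
  have m: "real m \<le> \<delta>0 * real n" "\<delta>0 * real n < real m + 1"
    using \<delta>0 by (simp_all add: m_def of_nat_floor)
  have "\<delta>0 * real n \<le> \<delta> * real n" using \<delta>0 by (intro mult_right_mono) auto
  then have outside: "int N < \<bar>x j\<bar>" if "j \<in> {1..m}" for j
    using that m l x by (intro admissible_outside_centre[OF adm]) auto
  obtain G where G: "G \<subseteq> {1..m}" "m \<le> 2 * card G" and sign: "(\<forall>j\<in>G. 0 < x j) \<or> (\<forall>j\<in>G. \<not> 0 < x j)"
    using exists_monochromatic_half[of "{1..m}"] by auto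
  have large: "(\<forall>j\<in>G. int N \<le> x j) \<or> (\<forall>j\<in>G. x j \<le> - int N)"
    using sign outside G(1) by fastforce
  have "G \<subseteq> {1..l}" using G(1) m l by auto
  have n: "0 < real n" using adm by (simp add: admissible_def)
  let ?q = "min p (1 - p)"
  have "1 / sqrt (2 * (real (card G) + 1) * ?q) \<le> 1 / sqrt (\<delta>0 * real n * ?q)"
    using m G(2) p \<delta>0 n by (intro divide_left_mono real_sqrt_le_mono mult_right_mono mult_pos_pos) auto
  moreover have "(\<Sum>S\<in>Pow {1..l}. subset_weight p l S * of_bool (u - (\<Sum>j\<in>S. x j) \<in> {a..b}))
      \<le> 1 / sqrt (2 * (real (card G) + 1) * ?q)" for u
  proof -
    have "(u - (\<Sum>j\<in>S. x j) \<in> {a..b}) = ((\<Sum>j\<in>S. x j) \<in> {u - b..u - a})" for S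
      by auto
    then show ?thesis
      using subset_sum_interval_probability_le[OF _ \<open>G \<subseteq> {1..l}\<close> _ large p, of "u - b" "u - a"] I by simp
  qed
  moreover have "0 \<le> \<delta>0 * real n * ?q" using \<delta>0 p by simp
  ultimately show ?thesis
    by (intro sum_frand_le_window_bound f_nonneg f_sum) (auto intro: order_trans)
qed

theorem lemma4p3:
  shows "\<exists>C::real. C > 0 \<and>
    (\<forall>(p::real) (\<delta>0::real) (f::int \<Rightarrow> real) (N::nat) (n::nat) (K::real) (\<delta>::real)
        (A::nat \<Rightarrow> int set) (l::nat) (x::nat \<Rightarrow> int).
       0 < p \<and> p < 1 \<and> 0 < \<delta>0 \<and> \<delta>0 < 1 \<and>
       (\<forall>t. f t \<ge> 0) \<and> (f has_sum 1) UNIV \<and>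
       admissible N n K \<delta> A \<and> \<delta>0 \<le> \<delta> \<and> \<delta> < 1 \<and> real n \<ge> 1 / \<delta>0 \<and>
       \<delta>0 * real n < real l \<and> l \<le> n \<and>
       (\<forall>j\<in>{1..l}. x j \<in> A j)
       \<longrightarrow>
       (\<forall>a b::int. card {a..b} \<le> N \<longrightarrow>
          (\<Sum>t\<in>{a..b}. frand p l f x t) \<le> C / sqrt (\<delta>0 * real n * min p (1 - p))) \<and>
       (\<forall>a b::int. card {a..b} \<ge> N \<longrightarrow>
          (\<Sum>t\<in>{a..b}. frand p l f x t)
            \<le> 2 * C * real (card {a..b}) / (sqrt (\<delta>0 * real n * min p (1 - p)) * real N)))"
proof (intro exI[of _ 1] conjI allI impI, goal_cases)
  case 1
  show ?case by simp
next
  case (2 p \<delta>0 f N n K \<delta> A l x a b)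
  then show ?case
    by (auto intro!: sum_frand_short_interval_le)
next
  case (3 p \<delta>0 f N n K \<delta> A l x a b)
  have N: "1 \<le> N" using 3 by (simp add: admissible_def)
  have \<beta>: "0 \<le> 1 / sqrt (\<delta>0 * real n * min p (1 - p))" using 3 by simp
  have short: "\<And>a b. card {a..b} \<le> N \<Longrightarrow>
      (\<Sum>t\<in>{a..b}. frand p l f x t) \<le> 1 / sqrt (\<delta>0 * real n * min p (1 - p))"
    using 3 by (auto intro!: sum_frand_short_interval_le)
  have "(\<Sum>t\<in>{a..b}. frand p l f x t)
      \<le> 2 * real (card {a..b}) * (1 / sqrt (\<delta>0 * real n * min p (1 - p))) / N"
    using 3 by (intro sum_long_interval_le[OF N \<beta> short]) simp
  then show ?case by simp
qed

end
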